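(* Let $(X,d)$ be a finite metric space, $S\subseteq X$, $\tau\ge0$, and $L\ge 2$, and assume there exists a $1$-Lipschitz map $\varphi:X\to L_2$ satisfying $\|\varphi(x)-\varphi(y)\|_2\ge \tau/L$ for all $x,y\in S$ with $d(x,y)\in[\tau/2,3\tau]$. Then there is a $1$-Lipschitz map $h:X\to L_2$ with $$\|h(x)-h(y)\|_2\ge\frac{\tau}{9L}$$ whenever $x,y\in X$, $d(x,S)\le \frac{\tau}{6L}$, and $d(x,y)\in[\tau,2\tau]$.
   Context: $L_2$ denotes a Hilbert space; $d(x,S)=\min_{s\in S}d(x,s)$. *)

theory Defs
  imports "HOL-Analysis.Analysis"
begin

end

theory Submission
  imports Defs
begin

text \<open>Choose a unit vector \<open>e\<close> orthogonal to the finitely many vectors \<open>\<phi> x\<close>, which is possible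
  in infinite dimension, and put \<open>h = 3/5 \<phi> + 4/5 d(\<cdot>, S) e\<close>. Both components of \<open>h\<close> are
  1-Lipschitz and mutually orthogonal, and \<open>(3/5)\<^sup>2 + (4/5)\<^sup>2 = 1\<close>, so \<open>h\<close> is 1-Lipschitz.
  For the lower bound let \<open>\<delta> = \<tau>/(6L)\<close>, \<open>d(x, s) \<le> \<delta>\<close> with \<open>s \<in> S\<close>, and \<open>\<tau> \<le> d(x, y) \<le> 2\<tau>\<close>.
  If some \<open>t \<in> S\<close> has \<open>d(y, t) < 2\<delta>\<close>, then \<open>d(s, t) \<in> [\<tau>/2, 3\<tau>]\<close>, so
  \<open>\<parallel>\<phi> x - \<phi> y\<parallel> \<ge> \<parallel>\<phi> s - \<phi> t\<parallel> - 3\<delta> \<ge> \<tau>/L - 3\<delta> = 3\<delta>\<close>;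
  otherwise \<open>d(y, S) - d(x, S) \<ge> \<delta>\<close>. Either way \<open>\<parallel>h x - h y\<parallel> \<ge> 4\<delta>/5 \<ge> \<tau>/(9L)\<close>.\<close>

lemma orthogonal_span_decomp_exists_finite:
  fixes B :: "'a::real_inner set"
  assumes "finite B"
  obtains y z where "y \<in> span B" "\<And>w. w \<in> span B \<Longrightarrow> orthogonal z w" "x = y + z"
proof -
  have "\<exists>y z. y \<in> span B \<and> (\<forall>w\<in>span B. orthogonal z w) \<and> x = y + z" for x
    using assms
  proof (induction B arbitrary: x rule: finite_induct)
    case empty
    then show ?case by (auto simp: orthogonal_clauses)
  next
    case (insert b B)
    obtain y z where y: "y \<in> span B" and z: "\<forall>w\<in>span B. orthogonal z w" and "x = y + z"
      using insert.IH by blast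
    obtain yb zb where yb: "yb \<in> span B" and zb: "\<forall>w\<in>span B. orthogonal zb w" and "b = yb + zb"
      using insert.IH by blast
    define c where "c = (z \<bullet> zb) / (zb \<bullet> zb)"
    define z' where "z' = z - c *\<^sub>R zb"
    have span_B: "span B \<subseteq> span (insert b B)"
      by (rule span_mono) blast
    have zb_span: "zb \<in> span (insert b B)"
      using \<open>b = yb + zb\<close> yb span_B by (metis add_diff_cancel_left' insertI1 span_base span_diff subsetD)
    have orth_B: "orthogonal z' w" if "w \<in> span B" for w
      using z zb that by (simp add: z'_def orthogonal_clauses)
    have "orthogonal z' zb"
      \<comment> \<open>if \<open>zb = 0\<close> then \<open>c = 0\<close>, as division by zero yields zero\<close>
      by (cases "zb = 0") (simp_all add: orthogonal_def z'_def c_def inner_diff_left)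
    then have "orthogonal z' b"
      using \<open>b = yb + zb\<close> orth_B[OF yb] by (simp add: orthogonal_clauses)
    have "orthogonal z' w" if w: "w \<in> span (insert b B)" for w
    proof -
      obtain k where "w - k *\<^sub>R b \<in> span B"
        using w by (auto simp: span_insert)
      then have "orthogonal z' ((w - k *\<^sub>R b) + k *\<^sub>R b)"
        using orth_B \<open>orthogonal z' b\<close> by (intro orthogonal_clauses(2,4))
      then show ?thesis by simp
    qed
    moreover have "y + c *\<^sub>R zb \<in> span (insert b B)"
      using y zb_span span_B by (meson span_add span_scale subsetD)
    moreover have "x = (y + c *\<^sub>R zb) + z'"
      using \<open>x = y + z\<close> by (simp add: z'_def)
    ultimately show ?case by blast
  qed
  then show thesis using that by blast
qed

lemma exists_unit_orthogonal_span:
  fixes B :: "'a::real_inner set"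
  assumes "finite B" and "span B \<noteq> UNIV"
  obtains e where "norm e = 1" "\<forall>w\<in>span B. orthogonal e w"
proof -
  obtain x where "x \<notin> span B"
    using assms(2) by blast
  moreover obtain y z where "y \<in> span B" "\<And>w. w \<in> span B \<Longrightarrow> orthogonal z w" "x = y + z"
    using orthogonal_span_decomp_exists_finite[OF assms(1)] by blast
  ultimately have "z \<noteq> 0"
    by auto
  show thesis
  proof (rule that)
    show "norm (z /\<^sub>R norm z) = 1"
      using \<open>z \<noteq> 0\<close> by simp
    show "\<forall>w\<in>span B. orthogonal (z /\<^sub>R norm z) w"
      using \<open>z \<noteq> 0\<close> \<open>\<And>w. w \<in> span B \<Longrightarrow> orthogonal z w\<close> by simp
  qed
qed

lemma norm_orthogonal_unit_combination:
  fixes u e :: "'a::real_inner"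
  assumes "orthogonal u e" and "norm e = 1"
  shows "(norm (a *\<^sub>R u + b *\<^sub>R e))\<^sup>2 = a\<^sup>2 * (norm u)\<^sup>2 + b\<^sup>2"
  using assms by (simp add: norm_add_Pythagorean orthogonal_clauses power_mult_distrib)

lemma norm_orthogonal_unit_combination_ge:
  fixes u e :: "'a::real_inner"
  assumes "orthogonal u e" and "norm e = 1"
  shows "\<bar>a\<bar> * norm u \<le> norm (a *\<^sub>R u + (b * t) *\<^sub>R e)"
    and "\<bar>b\<bar> * \<bar>t\<bar> \<le> norm (a *\<^sub>R u + (b * t) *\<^sub>R e)"
proof -
  have "(\<bar>a\<bar> * norm u)\<^sup>2 \<le> (norm (a *\<^sub>R u + (b * t) *\<^sub>R e))\<^sup>2"
    "(\<bar>b\<bar> * \<bar>t\<bar>)\<^sup>2 \<le> (norm (a *\<^sub>R u + (b * t) *\<^sub>R e))\<^sup>2"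
    by (simp_all add: norm_orthogonal_unit_combination[OF assms] power_mult_distrib)
  then show "\<bar>a\<bar> * norm u \<le> norm (a *\<^sub>R u + (b * t) *\<^sub>R e)"
    "\<bar>b\<bar> * \<bar>t\<bar> \<le> norm (a *\<^sub>R u + (b * t) *\<^sub>R e)"
    by (meson norm_ge_zero power2_le_imp_le)+
qed

lemma norm_orthogonal_unit_combination_le:
  fixes u e :: "'a::real_inner"
  assumes "orthogonal u e" and "norm e = 1"
    and "a\<^sup>2 + b\<^sup>2 \<le> 1" and "norm u \<le> D" and "\<bar>t\<bar> \<le> D"
  shows "norm (a *\<^sub>R u + (b * t) *\<^sub>R e) \<le> D"
proof -
  have "0 \<le> D"
    using assms(4) norm_ge_zero order_trans by blast
  then have "(norm u)\<^sup>2 \<le> D\<^sup>2" "t\<^sup>2 \<le> D\<^sup>2"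
    using assms(4,5) abs_le_square_iff[of t D] by (simp_all add: power_mono)
  then have "a\<^sup>2 * (norm u)\<^sup>2 + b\<^sup>2 * t\<^sup>2 \<le> (a\<^sup>2 + b\<^sup>2) * D\<^sup>2"
    by (simp add: distrib_right add_mono mult_left_mono)
  also have "\<dots> \<le> D\<^sup>2"
    using assms(3) by (simp add: mult_left_le_one_le)
  finally have "(norm (a *\<^sub>R u + (b * t) *\<^sub>R e))\<^sup>2 \<le> D\<^sup>2"
    by (simp add: norm_orthogonal_unit_combination[OF assms(1,2)] power_mult_distrib)
  then show ?thesis
    using \<open>0 \<le> D\<close> by (rule power2_le_imp_le)
qed

lemma norm_diff_orthogonal_sum:
  fixes \<phi> :: "'a \<Rightarrow> 'b::real_inner" and g :: "'a \<Rightarrow> real"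
  assumes h: "h = (\<lambda>z. a *\<^sub>R \<phi> z + (b * g z) *\<^sub>R e)"
    and e: "norm e = 1" "\<forall>w\<in>span (\<phi> ` X). orthogonal e w"
    and "x \<in> X" "y \<in> X"
  shows "\<bar>a\<bar> * norm (\<phi> x - \<phi> y) \<le> norm (h x - h y)" (is ?ge_\<phi>)
    and "\<bar>b\<bar> * \<bar>g x - g y\<bar> \<le> norm (h x - h y)" (is ?ge_g)
    and "a\<^sup>2 + b\<^sup>2 \<le> 1 \<Longrightarrow> norm (\<phi> x - \<phi> y) \<le> D \<Longrightarrow> \<bar>g x - g y\<bar> \<le> D \<Longrightarrow>
      norm (h x - h y) \<le> D" (is "_ \<Longrightarrow> _ \<Longrightarrow> _ \<Longrightarrow> ?le")
proof -
  have "h x - h y = a *\<^sub>R (\<phi> x - \<phi> y) + (b * (g x - g y)) *\<^sub>R e"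
    by (simp add: h right_diff_distrib scaleR_diff_left scaleR_diff_right)
  moreover have "\<phi> x - \<phi> y \<in> span (\<phi> ` X)"
    using assms(4,5) by (simp add: span_base span_diff)
  then have "orthogonal (\<phi> x - \<phi> y) e"
    using e(2) orthogonal_commute by blast
  ultimately show ?ge_\<phi> ?ge_g and "a\<^sup>2 + b\<^sup>2 \<le> 1 \<Longrightarrow> norm (\<phi> x - \<phi> y) \<le> D \<Longrightarrow> \<bar>g x - g y\<bar> \<le> D \<Longrightarrow> ?le"
    using norm_orthogonal_unit_combination_ge norm_orthogonal_unit_combination_le e(1) by simp_all
qed

text \<open>For \<open>S = {}\<close> the value is the unspecified \<open>Min {}\<close>, the same constant for every \<open>x\<close>.\<close>

definition dist_to_set :: "('a \<Rightarrow> 'a \<Rightarrow> real) \<Rightarrow> 'a set \<Rightarrow> 'a \<Rightarrow> real" where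
  "dist_to_set d S x = Min (d x ` S)"

lemma dist_to_set_le: "finite S \<Longrightarrow> t \<in> S \<Longrightarrow> dist_to_set d S x \<le> d x t"
  by (simp add: dist_to_set_def)

lemma dist_to_set_attained:
  assumes "finite S" and "S \<noteq> {}"
  obtains t where "t \<in> S" "dist_to_set d S x = d x t"
proof -
  have "Min (d x ` S) \<in> d x ` S"
    using assms by (intro Min_in) auto
  then show thesis
    using that unfolding dist_to_set_def by blast
qed

context Metric_space
begin

lemma dist_to_set_lipschitz:
  assumes "S \<subseteq> M" "finite S" "x \<in> M" "y \<in> M"
  shows "\<bar>dist_to_set d S x - dist_to_set d S y\<bar> \<le> d x y"
proof (cases "S = {}")
  case True
  then show ?thesis by (simp add: dist_to_set_def)
next
  case False
  have "dist_to_set d S x - dist_to_set d S y \<le> d x y" if "x \<in> M" "y \<in> M" for x y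
  proof -
    obtain t where "t \<in> S" "dist_to_set d S y = d y t"
      using dist_to_set_attained[OF \<open>finite S\<close> False] .
    moreover have "d x t \<le> d x y + d y t"
      using triangle \<open>t \<in> S\<close> assms(1) that by blast
    ultimately show ?thesis
      using dist_to_set_le[OF \<open>finite S\<close>, of t d x] by linarith
  qed
  from this[of x y] this[of y x] show ?thesis
    using assms(3,4) commute[of x y] by arith
qed

lemma abs_diff_dist_le:
  assumes "x \<in> M" "y \<in> M" "s \<in> M" "t \<in> M"
  shows "\<bar>d s t - d x y\<bar> \<le> d x s + d y t"
proof -
  have "d s t \<le> d s x + d x y + d y t"
    using triangle[of s x t] triangle[of x y t] assms by simp
  moreover have "d x y \<le> d x s + d s t + d t y"
    using triangle[of x s y] triangle[of s t y] assms by simp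
  ultimately show ?thesis
    using commute[of x s] commute[of t y] by arith
qed

lemma separated_or_dist_to_set_gap:
  fixes \<phi> :: "'a \<Rightarrow> 'b::real_normed_vector"
  assumes "S \<subseteq> M" "finite S" "0 \<le> \<delta>" "6 * \<delta> \<le> \<tau>"
    and lipschitz: "\<And>x y. x \<in> M \<Longrightarrow> y \<in> M \<Longrightarrow> norm (\<phi> x - \<phi> y) \<le> d x y"
    and separated: "\<And>s t. s \<in> S \<Longrightarrow> t \<in> S \<Longrightarrow> \<tau>/2 \<le> d s t \<Longrightarrow> d s t \<le> 3*\<tau> \<Longrightarrow>
      6 * \<delta> \<le> norm (\<phi> s - \<phi> t)"
    and "x \<in> M" "y \<in> M" "s \<in> S" "d x s \<le> \<delta>" "\<tau> \<le> d x y" "d x y \<le> 2*\<tau>"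
  shows "3 * \<delta> \<le> norm (\<phi> x - \<phi> y) \<or> \<delta> \<le> \<bar>dist_to_set d S x - dist_to_set d S y\<bar>"
proof (cases "\<exists>t\<in>S. d y t < 2*\<delta>")
  case True
  then obtain t where "t \<in> S" "d y t < 2*\<delta>"
    by blast
  have "s \<in> M" "t \<in> M"
    using \<open>s \<in> S\<close> \<open>t \<in> S\<close> assms(1) by auto
  have "\<bar>d s t - d x y\<bar> \<le> d x s + d y t"
    using abs_diff_dist_le \<open>s \<in> M\<close> \<open>t \<in> M\<close> assms(7,8) by blast
  then have "6 * \<delta> \<le> norm (\<phi> s - \<phi> t)"
    using separated \<open>s \<in> S\<close> \<open>t \<in> S\<close> \<open>d y t < 2*\<delta>\<close> assms by force
  moreover have "\<bar>norm (\<phi> s - \<phi> t) - norm (\<phi> x - \<phi> y)\<bar> \<le> norm (\<phi> x - \<phi> s) + norm (\<phi> y - \<phi> t)"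
    using Met_TC.abs_diff_dist_le[of "\<phi> x" "\<phi> y" "\<phi> s" "\<phi> t"] by (simp add: dist_norm)
  moreover have "norm (\<phi> x - \<phi> s) \<le> \<delta>" "norm (\<phi> y - \<phi> t) < 2*\<delta>"
    using lipschitz \<open>s \<in> M\<close> \<open>t \<in> M\<close> assms(7,8,10) \<open>d y t < 2*\<delta>\<close> by (meson order_trans le_less_trans)+
  ultimately show ?thesis
    by arith
next
  case False
  then have "2*\<delta> \<le> dist_to_set d S y"
    using dist_to_set_attained[OF \<open>finite S\<close>] \<open>s \<in> S\<close> by (metis empty_iff not_less)
  moreover have "dist_to_set d S x \<le> \<delta>"
    using dist_to_set_le[OF \<open>finite S\<close> \<open>s \<in> S\<close>] \<open>d x s \<le> \<delta>\<close> by (rule order_trans)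
  ultimately show ?thesis
    by linarith
qed

end

theorem lemma4p2:
  fixes X S :: "'a set" and d :: "'a \<Rightarrow> 'a \<Rightarrow> real"
    and \<tau> L :: real and \<phi> :: "'a \<Rightarrow> 'b::{real_inner, complete_space}"
  assumes "Metric_space X d" and "finite X"
    and "\<not> (\<exists>B::'b set. finite B \<and> span B = UNIV)"
    and "S \<subseteq> X" and "\<tau> \<ge> 0" and "L \<ge> 2"
    and "\<forall>x\<in>X. \<forall>y\<in>X. norm (\<phi> x - \<phi> y) \<le> d x y"
    and "\<forall>x\<in>S. \<forall>y\<in>S. \<tau>/2 \<le> d x y \<and> d x y \<le> 3*\<tau> \<longrightarrow> norm (\<phi> x - \<phi> y) \<ge> \<tau>/L"
  shows "\<exists>h::'a \<Rightarrow> 'b.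
           (\<forall>x\<in>X. \<forall>y\<in>X. norm (h x - h y) \<le> d x y) \<and>
           (\<forall>x\<in>X. \<forall>y\<in>X. (\<exists>s\<in>S. d x s \<le> \<tau>/(6*L)) \<and> \<tau> \<le> d x y \<and> d x y \<le> 2*\<tau>
               \<longrightarrow> norm (h x - h y) \<ge> \<tau>/(9*L))"
proof -
  interpret Metric_space X d by fact
  have "finite S"
    using assms(4,2) by (rule finite_subset)
  obtain e where e: "norm e = 1" "\<forall>w\<in>span (\<phi> ` X). orthogonal e w"
    using exists_unit_orthogonal_span[of "\<phi> ` X"] assms(2,3) by blast
  define g where "g = dist_to_set d S"
  define h where "h = (\<lambda>z. (3/5) *\<^sub>R \<phi> z + (4/5 * g z) *\<^sub>R e)"
  note h_bounds = norm_diff_orthogonal_sum[OF h_def e]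
  have "norm (h x - h y) \<le> d x y" if "x \<in> X" "y \<in> X" for x y
  proof (rule h_bounds(3)[OF that])
    show "(3/5)\<^sup>2 + (4/5)\<^sup>2 \<le> (1::real)"
      by (simp add: power2_eq_square)
    show "norm (\<phi> x - \<phi> y) \<le> d x y"
      using assms(7) that by blast
    show "\<bar>g x - g y\<bar> \<le> d x y"
      unfolding g_def using assms(4) \<open>finite S\<close> that by (rule dist_to_set_lipschitz)
  qed
  moreover have "\<tau>/(9*L) \<le> norm (h x - h y)"
    if "x \<in> X" "y \<in> X" "s \<in> S" "d x s \<le> \<tau>/(6*L)" "\<tau> \<le> d x y" "d x y \<le> 2*\<tau>" for x y s
  proof -
    define \<delta> where "\<delta> = \<tau>/(6*L)"
    have \<delta>: "0 \<le> \<delta>" "6*\<delta> \<le> \<tau>" "\<tau>/L = 6*\<delta>" "\<tau>/(9*L) \<le> 4/5 * \<delta>"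
      using assms(5,6) by (simp_all add: \<delta>_def field_simps mult_le_cancel_right1)
    have "3*\<delta> \<le> norm (\<phi> x - \<phi> y) \<or> \<delta> \<le> \<bar>g x - g y\<bar>"
      unfolding g_def
    proof (rule separated_or_dist_to_set_gap)
      show "6*\<delta> \<le> norm (\<phi> s - \<phi> t)"
        if "s \<in> S" "t \<in> S" "\<tau>/2 \<le> d s t" "d s t \<le> 3*\<tau>" for s t
        using assms(8) that \<delta>(3) by auto
    qed (use assms(4,7) that \<open>finite S\<close> \<delta>(1,2) in \<open>simp_all add: \<delta>_def\<close>)
    then have "4/5 * \<delta> \<le> norm (h x - h y)"
      using h_bounds(1,2)[OF that(1,2)] \<delta>(1) by (elim disjE) simp_all
    with \<delta>(4) show ?thesis
      by linarith
  qed
  ultimately show ?thesis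
    by blast
qed

end
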